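(* Let $m>1$, $D>0$, $r>0$, let $b,d$ be as in the standing assumptions below with $b'(\kappa)<0$, and let $c_\kappa$ and $c^*$ be as defined below. Then $c^*(m,r,b'(\kappa),d'(\kappa))\ge c_\kappa(m,r,b'(\kappa),d'(\kappa))$. If $b'(\kappa)\ge-d'(\kappa)$, then $c^*(m,r,b'(\kappa),d'(\kappa))=+\infty$ for large time delay $r$; while if $b'(\kappa)<-d'(\kappa)$, then $$c^*(m,r,b'(\kappa),d'(\kappa))=\frac{\mu^*(m,b'(\kappa),d'(\kappa))+o(1)}{r},\qquad r\to+\infty,$$ where $\mu^*(m,b'(\kappa),d'(\kappa)):=\pi\sqrt{\frac{Dm\kappa^{m-1}}{-b'(\kappa)-d'(\kappa)}}$.
   Context: Standing assumptions: $d\in C^2([0,+\infty))$ with $d(0)=0$, $d'(s)>0$, $d''(s)\ge0$ for $s>0$; $b\in C^1([0,+\infty);[0,+\infty))$ has exactly one positive local extremum point $s_M$ (its global maximum point), $b(0)=0$, there is $\kappa>0$ with $b(\kappa)=d(\kappa)$, $b'(0)>d'(0)$, $b'(\kappa)<d'(\kappa)$, $d(s)<b(s)\le b'(0)s$ for $s\in(0,\kappa)$, and $s_M<\kappa$. For $c>0$ let $\chi_\kappa(\lambda):=Dm\kappa^{m-1}\lambda^2+b'(\kappa)e^{-\lambda cr}-c\lambda-d'(\kappa)$; $c_\kappa\in(0,+\infty]$ is the extended real number such that $\chi_\kappa$ has three real roots $\lambda_1\le\lambda_2<0<\lambda_3$ if and only if $c\le c_\kappa$ (and no negative real root for $c>c_\kappa$).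 With $\sigma=c^{-2}$, let $\chi^*(\lambda):=D\sigma m\kappa^{m-1}\lambda^2-\lambda-d'(\kappa)+b'(\kappa)e^{-\lambda r}$, $\lambda\in\mathbb C$. Then $c^*=c^*(m,r,b'(\kappa),d'(\kappa))\in(0,+\infty]$ is the largest extended real number such that (for speeds $c$ below it) $\chi^*$ has no roots in the half-plane $\{\Re z>0\}$ other than a positive real root. *)

theory Defs
  imports "HOL-Analysis.Analysis" "HOL-Library.Extended_Real"
begin

text \<open>Parameters: D (diffusion), m (porous-medium exponent), kappa (positive equilibrium),
  B = b'(kappa), d1 = d'(kappa), c (speed), r (delay).\<close>

definition chi_kappa :: "real \<Rightarrow> real \<Rightarrow> real \<Rightarrow> real \<Rightarrow> real \<Rightarrow> real \<Rightarrow> real \<Rightarrow> real \<Rightarrow> real" where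
  "chi_kappa D m kappa B d1 r c lam =
     D * m * kappa powr (m - 1) * lam\<^sup>2 + B * exp (- lam * c * r) - c * lam - d1"

definition chi_kappa' :: "real \<Rightarrow> real \<Rightarrow> real \<Rightarrow> real \<Rightarrow> real \<Rightarrow> real \<Rightarrow> real \<Rightarrow> real \<Rightarrow> real" where
  "chi_kappa' D m kappa B d1 r c lam =
     2 * D * m * kappa powr (m - 1) * lam - B * c * r * exp (- lam * c * r) - c"

definition three_real_roots :: "real \<Rightarrow> real \<Rightarrow> real \<Rightarrow> real \<Rightarrow> real \<Rightarrow> real \<Rightarrow> real \<Rightarrow> bool" where
  "three_real_roots D m kappa B d1 r c \<longleftrightarrow>
     (\<exists>l1 l2 l3. l1 \<le> l2 \<and> l2 < 0 \<and> 0 < l3 \<and>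
        chi_kappa D m kappa B d1 r c l1 = 0 \<and> chi_kappa D m kappa B d1 r c l2 = 0 \<and>
        chi_kappa D m kappa B d1 r c l3 = 0 \<and>
        (l1 = l2 \<longrightarrow> chi_kappa' D m kappa B d1 r c l1 = 0))"

definition c_kappa :: "real \<Rightarrow> real \<Rightarrow> real \<Rightarrow> real \<Rightarrow> real \<Rightarrow> real \<Rightarrow> ereal" where
  "c_kappa D m kappa B d1 r =
     Sup {ereal c | c. c > 0 \<and> three_real_roots D m kappa B d1 r c}"

definition chi_star :: "real \<Rightarrow> real \<Rightarrow> real \<Rightarrow> real \<Rightarrow> real \<Rightarrow> real \<Rightarrow> real \<Rightarrow> complex \<Rightarrow> complex" where
  "chi_star D m kappa B d1 r c z =
     of_real (D * (1 / c\<^sup>2) * m * kappa powr (m - 1)) * z\<^sup>2 - z - of_real d1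
       + of_real B * exp (- z * of_real r)"

definition no_bad_roots :: "real \<Rightarrow> real \<Rightarrow> real \<Rightarrow> real \<Rightarrow> real \<Rightarrow> real \<Rightarrow> real \<Rightarrow> bool" where
  "no_bad_roots D m kappa B d1 r c \<longleftrightarrow>
     (\<forall>z. Re z > 0 \<longrightarrow> chi_star D m kappa B d1 r c z = 0 \<longrightarrow> Im z = 0)"

definition c_star :: "real \<Rightarrow> real \<Rightarrow> real \<Rightarrow> real \<Rightarrow> real \<Rightarrow> real \<Rightarrow> ereal" where
  "c_star D m kappa B d1 r =
     Sup {c0 :: ereal. \<forall>c::real. 0 < c \<and> ereal c < c0 \<longrightarrow> no_bad_roots D m kappa B d1 r c}"

definition mu_star :: "real \<Rightarrow> real \<Rightarrow> real \<Rightarrow> real \<Rightarrow> real \<Rightarrow> real" where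
  "mu_star D m kappa B d1 = pi * sqrt (D * m * kappa powr (m - 1) / (- B - d1))"

definition loc_extremum :: "(real \<Rightarrow> real) \<Rightarrow> real \<Rightarrow> bool" where
  "loc_extremum f s \<longleftrightarrow>
     (\<exists>e>0. \<forall>t. \<bar>t - s\<bar> < e \<longrightarrow> f t \<le> f s) \<or> (\<exists>e>0. \<forall>t. \<bar>t - s\<bar> < e \<longrightarrow> f s \<le> f t)"

end

theory Submission
  imports Defs
begin

text \<open>
  Put w = r z, alpha = D m kappa^(m-1) / (c r)^2, epsilon = 1/r, delta = d'(kappa) and
  beta = -b'(kappa) > 0. Then chi^* becomes
  Phi(w) = alpha w^2 - epsilon w - delta - beta e^(-w), and chi_kappa is Phi on the real axis
  at w = lambda c r. Take a nonreal root xi + i eta of Phi with xi > 0. Eliminating epsilon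
  between its real and imaginary parts gives alpha |w|^2 + delta < beta. So there is no such root when
  beta <= delta, whatever the speed. A comparison along the real axis shows that such a root
  forces Phi < 0 on the negative reals. Hence a negative root of chi_kappa at some speed
  excludes nonreal roots at every smaller speed, which gives c_kappa <= c^*.
  When beta > delta and epsilon -> 0, nonreal roots have eta close to pi. They exist for
  some alpha close to (beta - delta) / pi^2 and for none above it. In terms of c this is
  c r -> pi sqrt (D m kappa^(m-1) / (beta - delta)).
\<close>

section \<open>The rescaled characteristic function\<close>

definition scaled_chi :: "real \<Rightarrow> real \<Rightarrow> real \<Rightarrow> real \<Rightarrow> 'a::{real_normed_field,banach} \<Rightarrow> 'a" where
  "scaled_chi \<alpha> \<epsilon> \<delta> \<beta> w = of_real \<alpha> * w\<^sup>2 - of_real \<epsilon> * w - of_real \<delta> - of_real \<beta> * exp (- w)"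

definition right_roots_real :: "real \<Rightarrow> real \<Rightarrow> real \<Rightarrow> real \<Rightarrow> bool" where
  "right_roots_real \<alpha> \<epsilon> \<delta> \<beta> \<longleftrightarrow>
     (\<forall>w::complex. 0 < Re w \<longrightarrow> scaled_chi \<alpha> \<epsilon> \<delta> \<beta> w = 0 \<longrightarrow> Im w = 0)"

lemma chi_star_eq_scaled_chi:
  assumes "r \<noteq> 0"
  shows "chi_star D m kappa B d1 r c z =
    scaled_chi (D * m * kappa powr (m - 1) / (c * r)\<^sup>2) (1 / r) d1 (- B) (z * of_real r)"
  using assms by (simp add: chi_star_def scaled_chi_def power_mult_distrib)

lemma chi_kappa_eq_scaled_chi:
  assumes "c * r \<noteq> 0"
  shows "chi_kappa D m kappa B d1 r c lam =
    scaled_chi (D * m * kappa powr (m - 1) / (c * r)\<^sup>2) (1 / r) d1 (- B) (lam * c * r)"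
  using assms by (simp add: chi_kappa_def scaled_chi_def power_mult_distrib)

lemma scaled_chi_Complex_eq_0_iff:
  "scaled_chi \<alpha> \<epsilon> \<delta> \<beta> (Complex \<xi> \<eta>) = 0 \<longleftrightarrow>
     \<alpha> * (\<xi>\<^sup>2 - \<eta>\<^sup>2) - \<epsilon> * \<xi> - \<delta> - \<beta> * exp (- \<xi>) * cos \<eta> = 0 \<and>
     2 * \<alpha> * \<xi> * \<eta> - \<epsilon> * \<eta> + \<beta> * exp (- \<xi>) * sin \<eta> = 0"
  by (simp add: scaled_chi_def complex_eq_iff Re_exp Im_exp power2_eq_square algebra_simps)

lemma scaled_chi_cnj: "scaled_chi \<alpha> \<epsilon> \<delta> \<beta> (cnj w) = cnj (scaled_chi \<alpha> \<epsilon> \<delta> \<beta> w)"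
  by (simp add: scaled_chi_def exp_cnj)

lemma scaled_chi_mono_coeff:
  assumes "\<alpha> \<le> \<alpha>'"
  shows "scaled_chi \<alpha> \<epsilon> \<delta> \<beta> (s::real) \<le> scaled_chi \<alpha>' \<epsilon> \<delta> \<beta> s"
  using assms by (simp add: scaled_chi_def mult_right_mono)

lemma right_roots_realI:
  assumes "\<And>\<xi> \<eta>. 0 < \<xi> \<Longrightarrow> 0 < \<eta> \<Longrightarrow> scaled_chi \<alpha> \<epsilon> \<delta> \<beta> (Complex \<xi> \<eta>) \<noteq> 0"
  shows "right_roots_real \<alpha> \<epsilon> \<delta> \<beta>"
  unfolding right_roots_real_def
proof (intro allI impI)
  fix w :: complex assume "0 < Re w" and root: "scaled_chi \<alpha> \<epsilon> \<delta> \<beta> w = 0"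
  obtain \<xi> \<eta> where w: "w = Complex \<xi> \<eta>" by (cases w)
  have "scaled_chi \<alpha> \<epsilon> \<delta> \<beta> (Complex \<xi> (- \<eta>)) = 0"
    using root scaled_chi_cnj[of \<alpha> \<epsilon> \<delta> \<beta> w] by (simp add: w complex_cnj)
  then show "Im w = 0"
    using assms[of \<xi> \<eta>] assms[of \<xi> "- \<eta>"] \<open>0 < Re w\<close> root
    by (cases \<eta> "0 :: real" rule: linorder_cases) (auto simp: w)
qed

lemma no_bad_roots_iff_right_roots_real:
  assumes "r > 0"
  shows "no_bad_roots D m kappa B d1 r c \<longleftrightarrow>
    right_roots_real (D * m * kappa powr (m - 1) / (c * r)\<^sup>2) (1 / r) d1 (- B)"
    (is "_ \<longleftrightarrow> right_roots_real ?\<alpha> ?\<epsilon> d1 ?\<beta>")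
proof -
  have "no_bad_roots D m kappa B d1 r c \<longleftrightarrow>
      (\<forall>z. 0 < Re (z * of_real r) \<longrightarrow> scaled_chi ?\<alpha> ?\<epsilon> d1 ?\<beta> (z * of_real r) = 0
        \<longrightarrow> Im (z * of_real r) = 0)"
    using assms by (simp add: no_bad_roots_def chi_star_eq_scaled_chi zero_less_mult_iff)
  also have "\<dots> \<longleftrightarrow> right_roots_real ?\<alpha> ?\<epsilon> d1 ?\<beta>"
    unfolding right_roots_real_def
  proof (intro iffI allI)
    fix w :: complex
    assume "\<forall>z. 0 < Re (z * of_real r) \<longrightarrow> scaled_chi ?\<alpha> ?\<epsilon> d1 ?\<beta> (z * of_real r) = 0
        \<longrightarrow> Im (z * of_real r) = 0"
    then show "0 < Re w \<longrightarrow> scaled_chi ?\<alpha> ?\<epsilon> d1 ?\<beta> w = 0 \<longrightarrow> Im w = 0"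
      using assms by (auto dest: spec[of _ "w / of_real r"])
  next
    fix z :: complex
    assume "\<forall>w. 0 < Re w \<longrightarrow> scaled_chi ?\<alpha> ?\<epsilon> d1 ?\<beta> w = 0 \<longrightarrow> Im w = 0"
    then show "0 < Re (z * of_real r) \<longrightarrow> scaled_chi ?\<alpha> ?\<epsilon> d1 ?\<beta> (z * of_real r) = 0
        \<longrightarrow> Im (z * of_real r) = 0"
      by blast
  qed
  finally show ?thesis .
qed

section \<open>Nonreal roots in the right half-plane\<close>

lemma scaled_chi_root_identities:
  assumes root: "scaled_chi \<alpha> \<epsilon> \<delta> \<beta> (Complex \<xi> \<eta>) = 0" and "\<eta> \<noteq> 0"
  shows "\<epsilon> = 2 * \<alpha> * \<xi> + \<beta> * exp (- \<xi>) * (sin \<eta> / \<eta>)"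
    and "\<alpha> * (\<xi>\<^sup>2 + \<eta>\<^sup>2) = - \<delta> - \<beta> * exp (- \<xi>) * (cos \<eta> + \<xi> * (sin \<eta> / \<eta>))"
proof -
  have R: "\<alpha> * (\<xi>\<^sup>2 - \<eta>\<^sup>2) - \<epsilon> * \<xi> - \<delta> - \<beta> * exp (- \<xi>) * cos \<eta> = 0"
    and I: "2 * \<alpha> * \<xi> * \<eta> - \<epsilon> * \<eta> + \<beta> * exp (- \<xi>) * sin \<eta> = 0"
    using root by (simp_all add: scaled_chi_Complex_eq_0_iff)
  have "\<eta> * (2 * \<alpha> * \<xi> - \<epsilon> + \<beta> * exp (- \<xi>) * (sin \<eta> / \<eta>)) = 0"
    using I \<open>\<eta> \<noteq> 0\<close> by (simp add: algebra_simps)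
  with \<open>\<eta> \<noteq> 0\<close> show \<epsilon>: "\<epsilon> = 2 * \<alpha> * \<xi> + \<beta> * exp (- \<xi>) * (sin \<eta> / \<eta>)" by simp
  show "\<alpha> * (\<xi>\<^sup>2 + \<eta>\<^sup>2) = - \<delta> - \<beta> * exp (- \<xi>) * (cos \<eta> + \<xi> * (sin \<eta> / \<eta>))"
    using R unfolding \<epsilon> by (simp add: algebra_simps power2_eq_square)
qed

lemma abs_sin_div_le_one: "\<bar>sin x / x\<bar> \<le> (1::real)"
  using abs_sin_x_le_abs_x[of x] by (simp add: abs_divide divide_le_eq_1)

lemma scaled_chi_root_bound:
  assumes root: "scaled_chi \<alpha> \<epsilon> \<delta> \<beta> (Complex \<xi> \<eta>) = 0"
    and "0 < \<beta>" "0 < \<xi>" "\<eta> \<noteq> 0"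
  shows "\<alpha> * (\<xi>\<^sup>2 + \<eta>\<^sup>2) + \<delta> < \<beta>"
proof -
  define P where "P = \<beta> * exp (- \<xi>)"
  have "0 < P" using \<open>0 < \<beta>\<close> by (simp add: P_def)
  have "- (sin \<eta> / \<eta>) \<le> 1"
    using abs_sin_div_le_one[of \<eta>] by linarith
  then have "\<xi> * - (sin \<eta> / \<eta>) \<le> \<xi>"
    using mult_left_mono[of "- (sin \<eta> / \<eta>)" 1 \<xi>] \<open>0 < \<xi>\<close> by simp
  then have "- cos \<eta> - \<xi> * (sin \<eta> / \<eta>) \<le> 1 + \<xi>"
    using cos_ge_minus_one[of \<eta>] by linarith
  have "\<alpha> * (\<xi>\<^sup>2 + \<eta>\<^sup>2) + \<delta> = P * (- cos \<eta> - \<xi> * (sin \<eta> / \<eta>))"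
    using scaled_chi_root_identities(2)[OF root \<open>\<eta> \<noteq> 0\<close>] by (simp add: P_def algebra_simps)
  also have "\<dots> \<le> P * (1 + \<xi>)"
    using \<open>- cos \<eta> - \<xi> * (sin \<eta> / \<eta>) \<le> 1 + \<xi>\<close> \<open>0 < P\<close> by (simp add: mult_left_mono)
  also have "P * (1 + \<xi>) < P * exp \<xi>"
  proof -
    have "0 < \<xi>\<^sup>2 / 2" using \<open>0 < \<xi>\<close> by simp
    then have "1 + \<xi> < exp \<xi>"
      using exp_lower_Taylor_quadratic[of \<xi>] \<open>0 < \<xi>\<close> by linarith
    then show ?thesis using \<open>0 < P\<close> by simp
  qed
  also have "P * exp \<xi> = \<beta>" by (simp add: P_def exp_minus field_simps)
  finally show ?thesis .
qed

lemma right_roots_real_if_le: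
  assumes "0 \<le> \<alpha>" "0 < \<beta>" "\<beta> \<le> \<delta>"
  shows "right_roots_real \<alpha> \<epsilon> \<delta> \<beta>"
proof (rule right_roots_realI)
  fix \<xi> \<eta> :: real assume "0 < \<xi>" "0 < \<eta>"
  have "0 \<le> \<alpha> * (\<xi>\<^sup>2 + \<eta>\<^sup>2)" using \<open>0 \<le> \<alpha>\<close> by simp
  then show "scaled_chi \<alpha> \<epsilon> \<delta> \<beta> (Complex \<xi> \<eta>) \<noteq> 0"
    using scaled_chi_root_bound[of \<alpha> \<epsilon> \<delta> \<beta> \<xi> \<eta>] assms \<open>0 < \<xi>\<close> \<open>0 < \<eta>\<close> by linarith
qed

lemma cos_ge_one_minus_sq_half: "1 - x\<^sup>2 / 2 \<le> cos (x::real)"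
proof -
  have "\<bar>sin (x / 2)\<bar>\<^sup>2 \<le> \<bar>x / 2\<bar>\<^sup>2"
    by (intro power_mono abs_sin_x_le_abs_x) simp
  then have "sin (x / 2) ^ 2 \<le> (x / 2)\<^sup>2" by (simp only: power2_abs)
  moreover have "cos x = 1 - 2 * sin (x / 2) ^ 2"
    using cos_double_sin[of "x / 2"] by simp
  ultimately show ?thesis by (simp add: power_divide)
qed

lemma sq_le_exp:
  assumes "0 \<le> u"
  shows "u\<^sup>2 \<le> exp (u::real)"
proof -
  have "u \<le> 1 + u / 2 + (u / 2)\<^sup>2 / 2"
    using zero_le_power2[of "u / 2 - 1"] by (simp add: power2_eq_square field_simps)
  also have "\<dots> \<le> exp (u / 2)" using assms by (intro exp_lower_Taylor_quadratic) simp
  finally have "u\<^sup>2 \<le> (exp (u / 2))\<^sup>2" using assms by (intro power_mono) auto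
  also have "(exp (u / 2))\<^sup>2 = exp u" by (simp add: power2_eq_square exp_add[symmetric])
  finally show ?thesis .
qed

lemma diff_mult_le_exp:
  fixes \<xi> u :: real
  assumes "0 < \<xi>" "\<xi> \<le> u"
  shows "(u - \<xi>) * (\<xi> * u - u - \<xi>) \<le> \<xi>\<^sup>2 * exp u"
    and "(u - \<xi>) * ((u + \<xi>) / 2 + 1) \<le> exp u"
proof -
  show "(u - \<xi>) * (\<xi> * u - u - \<xi>) \<le> \<xi>\<^sup>2 * exp u"
  proof (cases "\<xi> * u - u - \<xi> \<le> 0")
    case True
    then have "(u - \<xi>) * (\<xi> * u - u - \<xi>) \<le> 0"
      using assms by (simp add: mult_nonneg_nonpos)
    also have "0 \<le> \<xi>\<^sup>2 * exp u" by simp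
    finally show ?thesis .
  next
    case False
    have "1 \<le> \<xi>"
    proof (rule ccontr)
      assume "\<not> 1 \<le> \<xi>"
      then have "(\<xi> - 1) * u \<le> 0" using assms by (simp add: mult_nonpos_nonneg)
      then have "\<xi> * u \<le> u" by (simp add: algebra_simps)
      then show False using False assms by linarith
    qed
    have "(u - \<xi>) * (\<xi> * u - u - \<xi>) \<le> u * (\<xi> * u)"
      using False assms by (intro mult_mono) auto
    also have "\<dots> = \<xi> * u\<^sup>2" by (simp add: power2_eq_square)
    also have "\<dots> \<le> \<xi> * exp u" using sq_le_exp[of u] assms by (intro mult_left_mono) auto
    also have "\<dots> \<le> \<xi>\<^sup>2 * exp u"
      using \<open>1 \<le> \<xi>\<close> by (intro mult_right_mono) (auto simp: power2_eq_square)
    finally show ?thesis .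
  qed
  have "(u - \<xi>) * ((u + \<xi>) / 2 + 1) = (u\<^sup>2 - \<xi>\<^sup>2) / 2 + u - \<xi>"
    by (simp add: algebra_simps power2_eq_square)
  also have "\<dots> \<le> 1 + u + u\<^sup>2 / 2"
    using assms zero_le_power2[of \<xi>] by (simp add: field_simps)
  also have "\<dots> \<le> exp u" using assms by (intro exp_lower_Taylor_quadratic) simp
  finally show "(u - \<xi>) * ((u + \<xi>) / 2 + 1) \<le> exp u" .
qed

lemma cos_sinc_comparison:
  fixes u \<xi> \<eta> :: real
  assumes "0 < \<xi>" "\<xi> \<le> u" "\<eta> \<noteq> 0"
  defines "C \<equiv> cos \<eta>" and "S \<equiv> sin \<eta> / \<eta>"
  shows "(- C - \<xi> * S) * (u\<^sup>2 + \<eta>\<^sup>2) \<le> (exp u - C - u * S) * (\<xi>\<^sup>2 + \<eta>\<^sup>2)"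
proof -
  have "- C * (u + \<xi>) \<le> - (1 - \<eta>\<^sup>2 / 2) * (u + \<xi>)"
    using cos_ge_one_minus_sq_half[of \<eta>] assms by (intro mult_right_mono) (auto simp: C_def)
  moreover have "- S * \<xi> * u \<le> \<xi> * u"
  proof -
    have "- S \<le> 1" using abs_sin_div_le_one[of \<eta>] unfolding S_def by linarith
    then have "- S * (\<xi> * u) \<le> 1 * (\<xi> * u)" using assms by (intro mult_right_mono) auto
    then show ?thesis by (simp add: mult.assoc)
  qed
  moreover have "\<eta> * sin \<eta> \<le> \<eta>\<^sup>2"
    using abs_sin_x_le_abs_x[of \<eta>] mult_left_mono[of "\<bar>sin \<eta>\<bar>" "\<bar>\<eta>\<bar>" "\<bar>\<eta>\<bar>"]
    by (simp add: power2_eq_square abs_mult[symmetric])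
  moreover have "- (1 - \<eta>\<^sup>2 / 2) * (u + \<xi>) + \<xi> * u + \<eta>\<^sup>2
      = (\<xi> * u - u - \<xi>) + \<eta>\<^sup>2 * ((u + \<xi>) / 2 + 1)"
    by (simp add: algebra_simps)
  ultimately have "- C * (u + \<xi>) - S * \<xi> * u + \<eta> * sin \<eta>
      \<le> (\<xi> * u - u - \<xi>) + \<eta>\<^sup>2 * ((u + \<xi>) / 2 + 1)"
    by linarith
  then have "(u - \<xi>) * (- C * (u + \<xi>) - S * \<xi> * u + \<eta> * sin \<eta>)
      \<le> (u - \<xi>) * ((\<xi> * u - u - \<xi>) + \<eta>\<^sup>2 * ((u + \<xi>) / 2 + 1))"
    using assms by (intro mult_left_mono) auto
  also have "\<dots> = (u - \<xi>) * (\<xi> * u - u - \<xi>) + \<eta>\<^sup>2 * ((u - \<xi>) * ((u + \<xi>) / 2 + 1))"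
    by (simp only: algebra_simps)
  also have "\<dots> \<le> \<xi>\<^sup>2 * exp u + \<eta>\<^sup>2 * exp u"
    using diff_mult_le_exp[OF assms(1,2)] by (intro add_mono mult_left_mono) auto
  finally have "(u - \<xi>) * (- C * (u + \<xi>) - S * \<xi> * u + \<eta> * sin \<eta>) \<le> exp u * (\<xi>\<^sup>2 + \<eta>\<^sup>2)"
    by (simp add: algebra_simps)
  moreover have "S * \<eta>\<^sup>2 = \<eta> * sin \<eta>"
    using assms by (simp add: S_def power2_eq_square)
  moreover have "(exp u - C - u * S) * (\<xi>\<^sup>2 + \<eta>\<^sup>2) - (- C - \<xi> * S) * (u\<^sup>2 + \<eta>\<^sup>2)
      = exp u * (\<xi>\<^sup>2 + \<eta>\<^sup>2) - (u - \<xi>) * (- C * (u + \<xi>) - S * \<xi> * u + S * \<eta>\<^sup>2)"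
    by (simp add: algebra_simps power2_eq_square)
  ultimately show ?thesis by simp
qed

lemma scaled_chi_real_eq_via_root:
  fixes s :: real
  assumes root: "scaled_chi \<alpha> \<epsilon> \<delta> \<beta> (Complex \<xi> \<eta>) = 0" and "\<eta> \<noteq> 0"
  shows "scaled_chi \<alpha> \<epsilon> \<delta> \<beta> s = \<alpha> * ((\<xi> - s)\<^sup>2 + \<eta>\<^sup>2)
    - \<beta> * exp (- \<xi>) * (exp (\<xi> - s) - cos \<eta> - (\<xi> - s) * (sin \<eta> / \<eta>))"
proof -
  define P where "P = \<beta> * exp (- \<xi>)"
  define S where "S = sin \<eta> / \<eta>"
  have \<epsilon>: "\<epsilon> = 2 * \<alpha> * \<xi> + P * S"
    using scaled_chi_root_identities(1)[OF assms] by (simp add: P_def S_def)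
  have \<delta>: "\<delta> = \<alpha> * (\<xi>\<^sup>2 - \<eta>\<^sup>2) - \<epsilon> * \<xi> - P * cos \<eta>"
    using root by (simp add: scaled_chi_Complex_eq_0_iff P_def)
  have "\<beta> * exp (- s) = P * exp (\<xi> - s)" by (simp add: P_def mult.assoc exp_add[symmetric])
  then have "scaled_chi \<alpha> \<epsilon> \<delta> \<beta> s = \<alpha> * s\<^sup>2 - \<epsilon> * s - \<delta> - P * exp (\<xi> - s)"
    by (simp add: scaled_chi_def)
  also have "\<dots> = \<alpha> * ((\<xi> - s)\<^sup>2 + \<eta>\<^sup>2) - P * (exp (\<xi> - s) - cos \<eta> - (\<xi> - s) * S)"
    unfolding \<delta> \<epsilon> by (simp add: algebra_simps power2_eq_square)
  finally show ?thesis by (simp add: P_def S_def)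
qed

text \<open>Phi(s) < 0 follows by comparing the previous lemma, at u = xi - s > xi, with the
  identity for alpha (xi^2 + eta^2) at the root; cos_sinc_comparison does the comparison.\<close>

lemma scaled_chi_neg_on_negative_axis:
  fixes s :: real
  assumes root: "scaled_chi \<alpha> \<epsilon> \<delta> \<beta> (Complex \<xi> \<eta>) = 0"
    and "0 < \<delta>" "0 < \<beta>" "0 < \<xi>" "\<eta> \<noteq> 0" "s < 0"
  shows "scaled_chi \<alpha> \<epsilon> \<delta> \<beta> s < 0"
proof -
  define P where "P = \<beta> * exp (- \<xi>)"
  define C where "C = cos \<eta>"
  define S where "S = sin \<eta> / \<eta>"
  define u where "u = \<xi> - s"
  have "0 < P" using \<open>0 < \<beta>\<close> by (simp add: P_def)
  have "0 < \<xi>\<^sup>2 + \<eta>\<^sup>2" "0 < u\<^sup>2 + \<eta>\<^sup>2"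
    using \<open>0 < \<xi>\<close> \<open>\<eta> \<noteq> 0\<close> by (simp_all add: add_pos_nonneg add_nonneg_pos)
  have Q: "\<alpha> * (\<xi>\<^sup>2 + \<eta>\<^sup>2) = - \<delta> + P * (- C - \<xi> * S)"
    using scaled_chi_root_identities(2)[OF root \<open>\<eta> \<noteq> 0\<close>]
    by (simp add: P_def C_def S_def algebra_simps)
  have "\<alpha> * (u\<^sup>2 + \<eta>\<^sup>2) * (\<xi>\<^sup>2 + \<eta>\<^sup>2) = (\<alpha> * (\<xi>\<^sup>2 + \<eta>\<^sup>2)) * (u\<^sup>2 + \<eta>\<^sup>2)"
    by (simp add: algebra_simps)
  also have "\<dots> = (- \<delta> + P * (- C - \<xi> * S)) * (u\<^sup>2 + \<eta>\<^sup>2)"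
    by (simp only: Q)
  also have "\<dots> < P * ((- C - \<xi> * S) * (u\<^sup>2 + \<eta>\<^sup>2))"
    using mult_pos_pos[OF \<open>0 < u\<^sup>2 + \<eta>\<^sup>2\<close> \<open>0 < \<delta>\<close>] by (simp add: algebra_simps)
  also have "\<dots> \<le> P * ((exp u - C - u * S) * (\<xi>\<^sup>2 + \<eta>\<^sup>2))"
    using cos_sinc_comparison[of \<xi> u \<eta>] \<open>0 < P\<close> assms
    by (intro mult_left_mono) (simp_all add: C_def S_def u_def)
  also have "\<dots> = P * (exp u - C - u * S) * (\<xi>\<^sup>2 + \<eta>\<^sup>2)" by (simp only: mult.assoc)
  finally have "\<alpha> * (u\<^sup>2 + \<eta>\<^sup>2) < P * (exp u - C - u * S)"
    using \<open>0 < \<xi>\<^sup>2 + \<eta>\<^sup>2\<close> by (simp add: mult_less_cancel_right)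
  then show ?thesis
    using scaled_chi_real_eq_via_root[OF root \<open>\<eta> \<noteq> 0\<close>, of s]
    by (simp add: P_def C_def S_def u_def)
qed

lemma right_roots_real_if_nonneg_on_negative_axis:
  fixes s :: real
  assumes "0 < \<delta>" "0 < \<beta>" "s < 0" "0 \<le> scaled_chi \<alpha> \<epsilon> \<delta> \<beta> s"
  shows "right_roots_real \<alpha> \<epsilon> \<delta> \<beta>"
proof (rule right_roots_realI)
  fix \<xi> \<eta> :: real assume "0 < \<xi>" "0 < \<eta>"
  then show "scaled_chi \<alpha> \<epsilon> \<delta> \<beta> (Complex \<xi> \<eta>) \<noteq> 0"
    using scaled_chi_neg_on_negative_axis[of \<alpha> \<epsilon> \<delta> \<beta> \<xi> \<eta> s] assms by auto
qed

section \<open>Nonreal roots as epsilon tends to zero\<close>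

lemma scaled_chi_root_Im_gt_pi_half:
  assumes root: "scaled_chi \<alpha> \<epsilon> \<delta> \<beta> (Complex \<xi> \<eta>) = 0"
    and "0 \<le> \<alpha>" "0 < \<delta>" "0 < \<beta>" "0 < \<xi>" "0 < \<eta>"
  shows "pi / 2 < \<eta>"
proof (rule ccontr)
  assume "\<not> pi / 2 < \<eta>"
  then have "0 \<le> cos \<eta>" "0 \<le> sin \<eta>"
    using \<open>0 < \<eta>\<close> by (auto intro!: cos_ge_zero sin_ge_zero)
  then have "0 \<le> \<beta> * exp (- \<xi>) * (cos \<eta> + \<xi> * (sin \<eta> / \<eta>))"
    using \<open>0 < \<beta>\<close> \<open>0 < \<xi>\<close> \<open>0 < \<eta>\<close> by simp
  moreover have "0 \<le> \<alpha> * (\<xi>\<^sup>2 + \<eta>\<^sup>2)" using \<open>0 \<le> \<alpha>\<close> by simp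
  ultimately show False
    using scaled_chi_root_identities(2)[OF root] \<open>0 < \<delta>\<close> \<open>0 < \<eta>\<close> by simp
qed

lemma scaled_chi_root_eps_lower_bound:
  fixes \<alpha>0 \<beta> \<delta> :: real
  defines "q \<equiv> sqrt ((\<beta> - \<delta>) / \<alpha>0)"
  assumes root: "scaled_chi \<alpha> \<epsilon> \<delta> \<beta> (Complex \<xi> \<eta>) = 0"
    and "0 < \<delta>" "\<delta> < \<beta>" "0 < \<alpha>0" "\<alpha>0 \<le> \<alpha>" "q < pi" "\<epsilon> \<le> 1" "0 < \<xi>" "0 < \<eta>"
  shows "\<beta> * exp (- (1 / (2 * \<alpha>0))) * sin q / pi \<le> \<epsilon>"
proof -
  define P where "P = \<beta> * exp (- \<xi>)"
  define S where "S = sin \<eta> / \<eta>"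
  have "0 < \<beta>" "0 < \<alpha>" "0 < P" using assms by (simp_all add: P_def)
  have "\<alpha> * \<eta>\<^sup>2 \<le> \<alpha> * (\<xi>\<^sup>2 + \<eta>\<^sup>2)" using \<open>0 < \<alpha>\<close> by simp
  then have "\<alpha> * \<eta>\<^sup>2 < \<beta> - \<delta>"
    using scaled_chi_root_bound[OF root \<open>0 < \<beta>\<close> \<open>0 < \<xi>\<close>] \<open>0 < \<eta>\<close> by linarith
  then have "\<eta>\<^sup>2 < (\<beta> - \<delta>) / \<alpha>" using \<open>0 < \<alpha>\<close> by (simp add: field_simps)
  also have "\<dots> \<le> (\<beta> - \<delta>) / \<alpha>0" using assms by (intro divide_left_mono) auto
  also have "\<dots> = q\<^sup>2" using assms by (simp add: q_def)
  finally have "\<eta> < q" by (rule power_less_imp_less_base) (use assms in \<open>simp add: q_def\<close>)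
  moreover have "pi / 2 < \<eta>"
    using scaled_chi_root_Im_gt_pi_half[OF root] assms \<open>0 < \<alpha>\<close> by simp
  ultimately have "sin (pi - q) < sin (pi - \<eta>)"
    using \<open>q < pi\<close> by (intro iffD2[OF sin_mono_less_eq]) auto
  then have "sin q < sin \<eta>" by simp
  have "0 < sin q"
    using \<open>\<eta> < q\<close> \<open>0 < \<eta>\<close> \<open>q < pi\<close> by (simp add: sin_gt_zero)
  have "sin q / pi \<le> S"
    unfolding S_def using \<open>sin q < sin \<eta>\<close> \<open>0 < sin q\<close> \<open>\<eta> < q\<close> \<open>q < pi\<close> \<open>0 < \<eta>\<close>
    by (intro frac_le) auto
  have "0 < sin q / pi" using \<open>0 < sin q\<close> by simp
  then have "0 < P * S" using \<open>sin q / pi \<le> S\<close> \<open>0 < P\<close> by simp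
  moreover have "0 < 2 * \<alpha> * \<xi>" using \<open>0 < \<alpha>\<close> \<open>0 < \<xi>\<close> by simp
  moreover have "\<epsilon> = 2 * \<alpha> * \<xi> + P * S"
    using scaled_chi_root_identities(1)[OF root] \<open>0 < \<eta>\<close> by (simp add: P_def S_def)
  ultimately have "2 * \<alpha> * \<xi> \<le> 1" and "P * S \<le> \<epsilon>"
    using \<open>\<epsilon> \<le> 1\<close> by linarith+
  moreover have "\<xi> * (2 * \<alpha>0) \<le> 2 * \<alpha> * \<xi>"
    using \<open>\<alpha>0 \<le> \<alpha>\<close> \<open>0 < \<xi>\<close> by simp
  ultimately have "\<xi> * (2 * \<alpha>0) \<le> 1" by linarith
  then have "\<xi> \<le> 1 / (2 * \<alpha>0)"
    using \<open>0 < \<alpha>0\<close> by (simp add: pos_le_divide_eq)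
  then have "\<beta> * exp (- (1 / (2 * \<alpha>0))) \<le> P" using \<open>0 < \<beta>\<close> by (simp add: P_def)
  then have "\<beta> * exp (- (1 / (2 * \<alpha>0))) * (sin q / pi) \<le> P * S"
    using \<open>sin q / pi \<le> S\<close> \<open>0 < sin q / pi\<close> \<open>0 < P\<close> by (intro mult_mono) auto
  then show ?thesis using \<open>P * S \<le> \<epsilon>\<close> by simp
qed

lemma eventually_right_roots_real:
  assumes "0 < \<delta>" "\<delta> < \<beta>" "(\<beta> - \<delta>) / pi\<^sup>2 < \<alpha>0"
  shows "\<forall>\<^sub>F \<epsilon> in at_right 0. \<forall>\<alpha>\<ge>\<alpha>0. right_roots_real \<alpha> \<epsilon> \<delta> \<beta>"
proof -
  define q where "q = sqrt ((\<beta> - \<delta>) / \<alpha>0)"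
  have "0 < (\<beta> - \<delta>) / pi\<^sup>2" using assms by simp
  then have "0 < \<alpha>0" using assms by linarith
  then have "0 < q" "q\<^sup>2 < pi\<^sup>2"
    using assms by (simp_all add: q_def field_simps)
  then have "q < pi" by (simp add: power_less_imp_less_base)
  define \<epsilon>0 where "\<epsilon>0 = min 1 (\<beta> * exp (- (1 / (2 * \<alpha>0))) * sin q / pi)"
  have "0 < \<epsilon>0"
    using \<open>0 < q\<close> \<open>q < pi\<close> assms by (simp add: \<epsilon>0_def sin_gt_zero)
  have "\<forall>\<^sub>F \<epsilon> in at_right 0. \<epsilon> < \<epsilon>0"
    using order_tendstoD(2)[OF tendsto_ident_at \<open>0 < \<epsilon>0\<close>] .
  then show ?thesis
  proof (rule eventually_mono, intro allI impI right_roots_realI)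
    fix \<epsilon> \<alpha> \<xi> \<eta> :: real
    assume "\<epsilon> < \<epsilon>0" "\<alpha>0 \<le> \<alpha>" "0 < \<xi>" "0 < \<eta>"
    then show "scaled_chi \<alpha> \<epsilon> \<delta> \<beta> (Complex \<xi> \<eta>) \<noteq> 0"
      using scaled_chi_root_eps_lower_bound[of \<alpha> \<epsilon> \<delta> \<beta> \<xi> \<eta> \<alpha>0] assms \<open>0 < \<alpha>0\<close> \<open>q < pi\<close>
      unfolding q_def \<epsilon>0_def by auto
  qed
qed

lemma coeff_eliminated_real_part_nonpos:
  fixes \<xi> \<gamma> \<epsilon> \<delta> P :: real
  defines "\<eta> \<equiv> pi + \<gamma>"
  assumes "0 < \<xi>" "0 < \<gamma>" "\<gamma> < pi" "0 \<le> \<epsilon>" "0 \<le> \<delta>" "0 < P"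
    and at_pi_plus: "2 * \<xi> * \<eta> < sin \<gamma> * (\<eta>\<^sup>2 - \<xi>\<^sup>2)"
  shows "(\<epsilon> - P * (sin \<eta> / \<eta>)) / (2 * \<xi>) * (\<xi>\<^sup>2 - \<eta>\<^sup>2) - \<epsilon> * \<xi> - \<delta> - P * cos \<eta> \<le> 0"
proof -
  have "0 < sin \<gamma>" using \<open>0 < \<gamma>\<close> \<open>\<gamma> < pi\<close> by (simp add: sin_gt_zero)
  have "0 < \<eta>" using \<open>0 < \<gamma>\<close> by (simp add: \<eta>_def add_pos_pos)
  have "0 < 2 * \<xi> * \<eta>" using \<open>0 < \<xi>\<close> \<open>0 < \<eta>\<close> by simp
  then have "0 < sin \<gamma> * (\<eta>\<^sup>2 - \<xi>\<^sup>2)" using at_pi_plus by linarith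
  then have "0 < \<eta>\<^sup>2 - \<xi>\<^sup>2" using \<open>0 < sin \<gamma>\<close> by (simp add: zero_less_mult_iff)
  have "(P * sin \<gamma> / \<eta>) / (2 * \<xi>) \<le> (\<epsilon> - P * (sin \<eta> / \<eta>)) / (2 * \<xi>)"
    using \<open>0 \<le> \<epsilon>\<close> \<open>0 < \<xi>\<close> by (intro divide_right_mono) (auto simp: \<eta>_def sin_add)
  then have "(\<epsilon> - P * (sin \<eta> / \<eta>)) / (2 * \<xi>) * (\<xi>\<^sup>2 - \<eta>\<^sup>2)
      \<le> (P * sin \<gamma> / \<eta>) / (2 * \<xi>) * (\<xi>\<^sup>2 - \<eta>\<^sup>2)"
    using \<open>0 < \<eta>\<^sup>2 - \<xi>\<^sup>2\<close> by (intro mult_right_mono_neg) auto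
  also have "\<dots> = - P * (sin \<gamma> * (\<eta>\<^sup>2 - \<xi>\<^sup>2) / (2 * \<xi> * \<eta>))"
    using \<open>0 < \<xi>\<close> \<open>0 < \<eta>\<close> by (simp add: field_simps)
  also have "\<dots> \<le> - P"
    using at_pi_plus \<open>0 < \<xi>\<close> \<open>0 < \<eta>\<close> \<open>0 < P\<close> by (simp add: le_divide_eq)
  finally have "(\<epsilon> - P * (sin \<eta> / \<eta>)) / (2 * \<xi>) * (\<xi>\<^sup>2 - \<eta>\<^sup>2) \<le> - P" .
  moreover have "P * - cos \<eta> \<le> P * 1" using \<open>0 < P\<close> by (intro mult_left_mono) auto
  moreover have "0 \<le> \<epsilon> * \<xi>" using \<open>0 \<le> \<epsilon>\<close> \<open>0 < \<xi>\<close> by simp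
  ultimately show ?thesis using \<open>0 \<le> \<delta>\<close> by linarith
qed

text \<open>Solving the imaginary part of the root equation for alpha leaves a real equation in eta
  alone, which changes sign between eta = pi and eta = pi + gamma.\<close>

lemma scaled_chi_root_in_strip:
  assumes "0 < \<xi>" "0 < \<gamma>" "\<gamma> < pi" "0 \<le> \<epsilon>" "0 \<le> \<delta>" "0 < \<beta>"
    and at_pi: "\<epsilon> * ((pi\<^sup>2 + \<xi>\<^sup>2) / (2 * \<xi>)) \<le> \<beta> * exp (- \<xi>) - \<delta>"
    and at_pi_plus: "2 * \<xi> * (pi + \<gamma>) < sin \<gamma> * ((pi + \<gamma>)\<^sup>2 - \<xi>\<^sup>2)"
  shows "\<exists>\<eta> \<alpha>. pi \<le> \<eta> \<and> \<eta> \<le> pi + \<gamma> \<and> scaled_chi \<alpha> \<epsilon> \<delta> \<beta> (Complex \<xi> \<eta>) = 0"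
proof -
  define P where "P = \<beta> * exp (- \<xi>)"
  have "0 < P" using \<open>0 < \<beta>\<close> by (simp add: P_def)
  define \<alpha> where "\<alpha> \<eta> = (\<epsilon> - P * (sin \<eta> / \<eta>)) / (2 * \<xi>)" for \<eta>
  define G where "G \<eta> = \<alpha> \<eta> * (\<xi>\<^sup>2 - \<eta>\<^sup>2) - \<epsilon> * \<xi> - \<delta> - P * cos \<eta>" for \<eta>
  have "G pi = P - \<delta> - \<epsilon> * ((pi\<^sup>2 + \<xi>\<^sup>2) / (2 * \<xi>))"
    using \<open>0 < \<xi>\<close> by (simp add: G_def \<alpha>_def field_simps power2_eq_square)
  then have "0 \<le> G pi" using at_pi by (simp add: P_def)
  moreover have "G (pi + \<gamma>) \<le> 0"
    unfolding G_def \<alpha>_def using coeff_eliminated_real_part_nonpos[of \<xi> \<gamma> \<epsilon> \<delta> P] assms \<open>0 < P\<close>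
    by simp
  moreover have "continuous_on {pi..pi + \<gamma>} G"
  proof -
    have "\<forall>x\<in>{pi..pi + \<gamma>}. x \<noteq> 0" using pi_gt_zero by (metis atLeastAtMost_iff not_le)
    then show ?thesis
      unfolding G_def \<alpha>_def using \<open>0 < \<xi>\<close> by (intro continuous_intros) auto
  qed
  ultimately obtain \<eta> where "pi \<le> \<eta>" "\<eta> \<le> pi + \<gamma>" "G \<eta> = 0"
    using IVT2'[of G "pi + \<gamma>" 0 pi] \<open>0 < \<gamma>\<close> by auto
  moreover have "2 * \<alpha> \<eta> * \<xi> * \<eta> - \<epsilon> * \<eta> + \<beta> * exp (- \<xi>) * sin \<eta> = 0"
    using \<open>0 < \<xi>\<close> \<open>pi \<le> \<eta>\<close> pi_gt_zero by (simp add: \<alpha>_def P_def field_simps)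
  ultimately show ?thesis
    by (intro exI[of _ \<eta>] exI[of _ "\<alpha> \<eta>"]) (simp add: scaled_chi_Complex_eq_0_iff G_def P_def)
qed

lemma scaled_chi_root_coeff_ge:
  assumes root: "scaled_chi \<alpha> \<epsilon> \<delta> \<beta> (Complex \<xi> \<eta>) = 0"
    and "0 \<le> \<xi>" "\<xi> < pi" "pi \<le> \<eta>" "\<eta> \<le> pi + \<gamma>" "\<gamma> \<le> pi" "0 \<le> T" "0 \<le> \<beta>"
    and small_eps: "\<epsilon> * \<xi> \<le> \<beta> * exp (- \<xi>) * cos \<gamma> - \<delta> - T * (pi + \<gamma>)\<^sup>2"
  shows "T \<le> \<alpha>"
proof -
  have "cos \<gamma> \<le> cos (\<eta> - pi)"
    using assms by (intro cos_monotone_0_pi_le) auto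
  then have "\<beta> * exp (- \<xi>) * cos \<gamma> \<le> \<beta> * exp (- \<xi>) * (- cos \<eta>)"
    using \<open>0 \<le> \<beta>\<close> by (intro mult_left_mono) (simp_all add: cos_diff)
  moreover have "\<alpha> * (\<eta>\<^sup>2 - \<xi>\<^sup>2) = - \<epsilon> * \<xi> - \<delta> - \<beta> * exp (- \<xi>) * cos \<eta>"
    using root by (simp add: scaled_chi_Complex_eq_0_iff algebra_simps)
  moreover have "\<xi>\<^sup>2 < \<eta>\<^sup>2" "\<eta>\<^sup>2 \<le> (pi + \<gamma>)\<^sup>2"
    using assms by (auto intro!: power_strict_mono power_mono)
  then have "\<eta>\<^sup>2 - \<xi>\<^sup>2 \<le> (pi + \<gamma>)\<^sup>2" using zero_le_power2[of \<xi>] by linarith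
  then have "T * (\<eta>\<^sup>2 - \<xi>\<^sup>2) \<le> T * (pi + \<gamma>)\<^sup>2"
    using \<open>0 \<le> T\<close> by (rule mult_left_mono)
  ultimately have "T * (\<eta>\<^sup>2 - \<xi>\<^sup>2) \<le> \<alpha> * (\<eta>\<^sup>2 - \<xi>\<^sup>2)"
    using small_eps by linarith
  then show ?thesis using \<open>\<xi>\<^sup>2 < \<eta>\<^sup>2\<close> by (simp add: mult_le_cancel_right)
qed

lemma exists_strip_parameters:
  assumes "0 < T" "T < (\<beta> - \<delta>) / pi\<^sup>2"
  obtains \<gamma> \<xi> where "0 < \<gamma>" "\<gamma> < 1" "0 < \<xi>" "\<xi> < 1"
    and "0 < \<beta> * exp (- \<xi>) * cos \<gamma> - \<delta> - T * (pi + \<gamma>)\<^sup>2"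
    and "2 * \<xi> * (pi + \<gamma>) < sin \<gamma> * ((pi + \<gamma>)\<^sup>2 - \<xi>\<^sup>2)"
proof -
  have "((\<lambda>\<gamma>. (\<beta> * cos \<gamma> - \<delta>) / (pi + \<gamma>)\<^sup>2) \<longlongrightarrow> (\<beta> - \<delta>) / pi\<^sup>2) (at_right 0)"
    by (auto intro!: tendsto_eq_intros)
  then have "\<forall>\<^sub>F \<gamma> in at_right 0. T < (\<beta> * cos \<gamma> - \<delta>) / (pi + \<gamma>)\<^sup>2 \<and> 0 < \<gamma> \<and> \<gamma> < 1"
    using order_tendstoD(1)[OF _ \<open>T < (\<beta> - \<delta>) / pi\<^sup>2\<close>] eventually_at_right_less
      order_tendstoD(2)[OF tendsto_ident_at zero_less_one] by (intro eventually_conj)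
  then obtain \<gamma> where "0 < \<gamma>" "\<gamma> < 1" and "T < (\<beta> * cos \<gamma> - \<delta>) / (pi + \<gamma>)\<^sup>2"
    using eventually_happens'[OF trivial_limit_at_right_real] by blast
  moreover have "0 < (pi + \<gamma>)\<^sup>2" using \<open>0 < \<gamma>\<close> pi_gt3 by simp
  ultimately have "T * (pi + \<gamma>)\<^sup>2 < \<beta> * cos \<gamma> - \<delta>"
    by (simp add: pos_less_divide_eq)
  have "((\<lambda>\<xi>. \<beta> * exp (- \<xi>) * cos \<gamma> - \<delta> - T * (pi + \<gamma>)\<^sup>2)
      \<longlongrightarrow> \<beta> * cos \<gamma> - \<delta> - T * (pi + \<gamma>)\<^sup>2) (at_right 0)"
    by (auto intro!: tendsto_eq_intros)
  then have ev_T: "\<forall>\<^sub>F \<xi> in at_right 0. 0 < \<beta> * exp (- \<xi>) * cos \<gamma> - \<delta> - T * (pi + \<gamma>)\<^sup>2"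
    by (rule order_tendstoD(1)) (use \<open>T * (pi + \<gamma>)\<^sup>2 < \<beta> * cos \<gamma> - \<delta>\<close> in simp)
  have "((\<lambda>\<xi>. sin \<gamma> * ((pi + \<gamma>)\<^sup>2 - \<xi>\<^sup>2) - 2 * \<xi> * (pi + \<gamma>))
      \<longlongrightarrow> sin \<gamma> * (pi + \<gamma>)\<^sup>2) (at_right 0)"
    by (auto intro!: tendsto_eq_intros)
  moreover have "0 < sin \<gamma> * (pi + \<gamma>)\<^sup>2"
    using \<open>0 < \<gamma>\<close> \<open>\<gamma> < 1\<close> pi_gt3 by (simp add: sin_gt_zero)
  ultimately have ev_sin: "\<forall>\<^sub>F \<xi> in at_right 0. 0 < sin \<gamma> * ((pi + \<gamma>)\<^sup>2 - \<xi>\<^sup>2) - 2 * \<xi> * (pi + \<gamma>)"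
    by (rule order_tendstoD(1))
  have "\<forall>\<^sub>F \<xi> in at_right 0. 0 < \<beta> * exp (- \<xi>) * cos \<gamma> - \<delta> - T * (pi + \<gamma>)\<^sup>2 \<and>
      0 < sin \<gamma> * ((pi + \<gamma>)\<^sup>2 - \<xi>\<^sup>2) - 2 * \<xi> * (pi + \<gamma>) \<and> 0 < \<xi> \<and> \<xi> < 1"
    using ev_T ev_sin eventually_at_right_less order_tendstoD(2)[OF tendsto_ident_at zero_less_one]
    by (intro eventually_conj)
  then obtain \<xi> where "0 < \<xi>" "\<xi> < 1"
    and "0 < \<beta> * exp (- \<xi>) * cos \<gamma> - \<delta> - T * (pi + \<gamma>)\<^sup>2"
    and "0 < sin \<gamma> * ((pi + \<gamma>)\<^sup>2 - \<xi>\<^sup>2) - 2 * \<xi> * (pi + \<gamma>)"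
    using eventually_happens'[OF trivial_limit_at_right_real] by blast
  with \<open>0 < \<gamma>\<close> \<open>\<gamma> < 1\<close> show ?thesis by (intro that) auto
qed

lemma eventually_not_right_roots_real:
  assumes "0 \<le> \<delta>" "0 < T" "T < (\<beta> - \<delta>) / pi\<^sup>2"
  shows "\<forall>\<^sub>F \<epsilon> in at_right 0. \<exists>\<alpha>\<ge>T. \<not> right_roots_real \<alpha> \<epsilon> \<delta> \<beta>"
proof -
  have "0 < (\<beta> - \<delta>) / pi\<^sup>2" using assms by linarith
  then have "0 < \<beta>" using \<open>0 \<le> \<delta>\<close> by (simp add: zero_less_divide_iff)
  obtain \<gamma> \<xi> where "0 < \<gamma>" "\<gamma> < 1" "0 < \<xi>" "\<xi> < 1"
    and small_T: "0 < \<beta> * exp (- \<xi>) * cos \<gamma> - \<delta> - T * (pi + \<gamma>)\<^sup>2"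
    and at_pi_plus: "2 * \<xi> * (pi + \<gamma>) < sin \<gamma> * ((pi + \<gamma>)\<^sup>2 - \<xi>\<^sup>2)"
    using exists_strip_parameters[OF \<open>0 < T\<close> \<open>T < _\<close>] by blast
  have "\<beta> * exp (- \<xi>) * cos \<gamma> \<le> \<beta> * exp (- \<xi>)"
    using \<open>0 < \<beta>\<close> by (simp add: mult_left_le)
  moreover have "0 \<le> T * (pi + \<gamma>)\<^sup>2" using \<open>0 < T\<close> by simp
  ultimately have "0 < \<beta> * exp (- \<xi>) - \<delta>" using small_T by linarith
  have ev_at_pi: "\<forall>\<^sub>F \<epsilon> in at_right 0. \<epsilon> * ((pi\<^sup>2 + \<xi>\<^sup>2) / (2 * \<xi>)) < \<beta> * exp (- \<xi>) - \<delta>"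
    and ev_small: "\<forall>\<^sub>F \<epsilon> in at_right 0. \<epsilon> * \<xi> < \<beta> * exp (- \<xi>) * cos \<gamma> - \<delta> - T * (pi + \<gamma>)\<^sup>2"
    using order_tendstoD(2)[OF tendsto_mult_left_zero[OF tendsto_ident_at]]
      \<open>0 < \<beta> * exp (- \<xi>) - \<delta>\<close> small_T by blast+
  have "\<gamma> < pi" using \<open>\<gamma> < 1\<close> pi_gt3 by linarith
  show ?thesis
    using eventually_at_right_less[of 0] ev_at_pi ev_small
  proof eventually_elim
    case (elim \<epsilon>)
    then obtain \<eta> \<alpha> where "pi \<le> \<eta>" "\<eta> \<le> pi + \<gamma>" and root: "scaled_chi \<alpha> \<epsilon> \<delta> \<beta> (Complex \<xi> \<eta>) = 0"
      using scaled_chi_root_in_strip[OF \<open>0 < \<xi>\<close> \<open>0 < \<gamma>\<close> \<open>\<gamma> < pi\<close> _ \<open>0 \<le> \<delta>\<close> \<open>0 < \<beta>\<close> _ at_pi_plus]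
      by (meson less_imp_le)
    then have "T \<le> \<alpha>"
      using scaled_chi_root_coeff_ge[OF root] elim \<open>0 < \<xi>\<close> \<open>\<xi> < 1\<close> \<open>\<gamma> < pi\<close> pi_gt3 \<open>0 < T\<close> \<open>0 < \<beta>\<close>
      by auto
    moreover have "\<not> right_roots_real \<alpha> \<epsilon> \<delta> \<beta>"
      using root \<open>0 < \<xi>\<close> \<open>pi \<le> \<eta>\<close> pi_gt_zero unfolding right_roots_real_def
      by (metis complex.sel order_less_le_trans less_irrefl)
    ultimately show "\<exists>\<alpha>\<ge>T. \<not> right_roots_real \<alpha> \<epsilon> \<delta> \<beta>" by blast
  qed
qed

section \<open>The critical speed\<close>

lemma le_c_star:
  assumes "\<And>c. 0 < c \<Longrightarrow> ereal c < c0 \<Longrightarrow> no_bad_roots D m kappa B d1 r c"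
  shows "c0 \<le> c_star D m kappa B d1 r"
  unfolding c_star_def using assms by (intro Sup_upper) auto

lemma c_star_le:
  assumes "0 < c" "\<not> no_bad_roots D m kappa B d1 r c"
  shows "c_star D m kappa B d1 r \<le> ereal c"
  unfolding c_star_def using assms by (intro Sup_least) (auto simp: not_le[symmetric])

lemma c_kappa_le_c_star:
  assumes "0 < r" "0 < D * m * kappa powr (m - 1)" "B < 0" "0 < d1"
  shows "c_kappa D m kappa B d1 r \<le> c_star D m kappa B d1 r"
proof -
  define A where "A = D * m * kappa powr (m - 1)"
  have "ereal c' \<le> c_star D m kappa B d1 r"
    if "0 < c'" and "three_real_roots D m kappa B d1 r c'" for c'
  proof (rule le_c_star)
    fix c assume "0 < c" "ereal c < ereal c'"
    obtain l where "l < 0" and "chi_kappa D m kappa B d1 r c' l = 0"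
      using \<open>three_real_roots D m kappa B d1 r c'\<close> unfolding three_real_roots_def
      by (meson order_le_less_trans)
    then have root: "scaled_chi (A / (c' * r)\<^sup>2) (1 / r) d1 (- B) (l * c' * r) = 0"
      using \<open>0 < c'\<close> \<open>0 < r\<close> by (simp add: chi_kappa_eq_scaled_chi A_def)
    have "A / (c' * r)\<^sup>2 \<le> A / (c * r)\<^sup>2"
      using assms \<open>0 < c\<close> \<open>ereal c < ereal c'\<close>
      by (intro divide_left_mono mult_pos_pos) (auto simp: A_def intro!: power_mono mult_right_mono)
    then have "0 \<le> scaled_chi (A / (c * r)\<^sup>2) (1 / r) d1 (- B) (l * c' * r)"
      using root scaled_chi_mono_coeff by metis
    moreover have "l * c' * r < 0"
      using \<open>l < 0\<close> \<open>0 < c'\<close> \<open>0 < r\<close> by (simp add: mult_neg_pos)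
    ultimately show "no_bad_roots D m kappa B d1 r c"
      using right_roots_real_if_nonneg_on_negative_axis[of d1 "- B" "l * c' * r"] assms
      by (simp add: no_bad_roots_iff_right_roots_real A_def)
  qed
  then show ?thesis unfolding c_kappa_def by (auto intro: Sup_least)
qed

lemma c_star_eq_infinity:
  assumes "0 < r" "0 \<le> D * m * kappa powr (m - 1)" "B < 0" "- d1 \<le> B"
  shows "c_star D m kappa B d1 r = \<infinity>"
proof -
  have "\<infinity> \<le> c_star D m kappa B d1 r"
    using assms by (intro le_c_star) (simp add: no_bad_roots_iff_right_roots_real right_roots_real_if_le)
  then show ?thesis by simp
qed

lemma eventually_c_star_ge:
  assumes "0 < D * m * kappa powr (m - 1)" "0 < d1" "B < - d1"
    and "0 < \<mu>" "\<mu> < mu_star D m kappa B d1"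
  shows "\<forall>\<^sub>F r in at_top. ereal \<mu> \<le> ereal r * c_star D m kappa B d1 r"
proof -
  define A where "A = D * m * kappa powr (m - 1)"
  have "\<mu>\<^sup>2 < (pi * sqrt (A / (- B - d1)))\<^sup>2"
    using assms by (intro power_strict_mono) (simp_all add: mu_star_def A_def)
  then have "(- B - d1) / pi\<^sup>2 < A / \<mu>\<^sup>2"
    using assms by (simp add: A_def power_mult_distrib field_simps)
  from eventually_right_roots_real[OF \<open>0 < d1\<close> _ this]
  have "\<forall>\<^sub>F r in at_top. \<forall>\<alpha>\<ge>A / \<mu>\<^sup>2. right_roots_real \<alpha> (inverse r) d1 (- B)"
    using assms(3) by (intro eventually_compose_filterlim[OF _ filterlim_inverse_at_right_top]) simp
  with eventually_gt_at_top[of 0] show ?thesis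
  proof eventually_elim
    case (elim r)
    have "ereal (\<mu> / r) \<le> c_star D m kappa B d1 r"
    proof (rule le_c_star)
      fix c assume "0 < c" "ereal c < ereal (\<mu> / r)"
      then have "c * r < \<mu>" using elim by (simp add: field_simps)
      then have "A / \<mu>\<^sup>2 \<le> A / (c * r)\<^sup>2"
        using \<open>0 < c\<close> elim assms by (intro divide_left_mono) (auto simp: A_def intro!: power_mono)
      then show "no_bad_roots D m kappa B d1 r c"
        using elim by (simp add: no_bad_roots_iff_right_roots_real A_def inverse_eq_divide)
    qed
    then have "ereal r * ereal (\<mu> / r) \<le> ereal r * c_star D m kappa B d1 r"
      using elim by (intro ereal_mult_left_mono) auto
    then show ?case using elim by simp
  qed
qed

lemma eventually_c_star_le:
  assumes "0 < D * m * kappa powr (m - 1)" "0 < d1" "B < - d1"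
    and "mu_star D m kappa B d1 < \<mu>"
  shows "\<forall>\<^sub>F r in at_top. ereal r * c_star D m kappa B d1 r \<le> ereal \<mu>"
proof -
  define A where "A = D * m * kappa powr (m - 1)"
  have "0 < mu_star D m kappa B d1" using assms by (simp add: mu_star_def)
  then have "0 < \<mu>" using assms by linarith
  from \<open>0 < mu_star D m kappa B d1\<close> have "(pi * sqrt (A / (- B - d1)))\<^sup>2 < \<mu>\<^sup>2"
    using assms by (intro power_strict_mono) (simp_all add: mu_star_def A_def)
  then have "A / \<mu>\<^sup>2 < (- B - d1) / pi\<^sup>2" and "0 < A / \<mu>\<^sup>2"
    using assms \<open>0 < mu_star D m kappa B d1\<close> by (simp_all add: A_def power_mult_distrib field_simps)
  from eventually_not_right_roots_real[OF _ this(2,1)]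
  have "\<forall>\<^sub>F r in at_top. \<exists>\<alpha>\<ge>A / \<mu>\<^sup>2. \<not> right_roots_real \<alpha> (inverse r) d1 (- B)"
    using assms(2) by (intro eventually_compose_filterlim[OF _ filterlim_inverse_at_right_top]) simp
  with eventually_gt_at_top[of 0] show ?thesis
  proof eventually_elim
    case (elim r)
    then obtain \<alpha> where "A / \<mu>\<^sup>2 \<le> \<alpha>" and not_real: "\<not> right_roots_real \<alpha> (1 / r) d1 (- B)"
      by (auto simp: inverse_eq_divide)
    then have "0 < \<alpha>" using \<open>0 < A / \<mu>\<^sup>2\<close> by linarith
    define c where "c = sqrt (A / \<alpha>) / r"
    have "0 < c" using \<open>0 < \<alpha>\<close> elim assms by (simp add: c_def A_def)
    have "0 < A" using assms by (simp add: A_def)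
    then have "A / (c * r)\<^sup>2 = \<alpha>" using \<open>0 < \<alpha>\<close> elim by (simp add: c_def)
    then have "\<not> no_bad_roots D m kappa B d1 r c"
      using not_real elim by (simp add: no_bad_roots_iff_right_roots_real A_def)
    then have "ereal r * c_star D m kappa B d1 r \<le> ereal r * ereal c"
      using c_star_le[OF \<open>0 < c\<close>] elim by (intro ereal_mult_left_mono) auto
    also have "ereal r * ereal c \<le> ereal \<mu>"
    proof -
      have "A / \<alpha> \<le> \<mu>\<^sup>2"
        using \<open>A / \<mu>\<^sup>2 \<le> \<alpha>\<close> \<open>0 < \<alpha>\<close> \<open>0 < \<mu>\<close> by (simp add: field_simps)
      then have "sqrt (A / \<alpha>) \<le> \<mu>"
        using \<open>0 < \<mu>\<close> by (simp add: real_le_lsqrt)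
      then show ?thesis using elim by (simp add: c_def)
    qed
    finally show ?case .
  qed
qed

lemma c_star_asymptotics:
  assumes "0 < D * m * kappa powr (m - 1)" "0 < d1" "B < - d1"
  shows "((\<lambda>r. ereal r * c_star D m kappa B d1 r) \<longlongrightarrow> ereal (mu_star D m kappa B d1)) at_top"
proof (rule order_tendstoI)
  fix a assume "a < ereal (mu_star D m kappa B d1)"
  moreover have "0 < mu_star D m kappa B d1" using assms by (simp add: mu_star_def)
  ultimately have "max a 0 < ereal (mu_star D m kappa B d1)" by simp
  from ereal_dense2[OF this] obtain \<mu> where "max a 0 < ereal \<mu>" "ereal \<mu> < ereal (mu_star D m kappa B d1)"
    by blast
  with eventually_c_star_ge[OF assms, of \<mu>]
  show "\<forall>\<^sub>F r in at_top. a < ereal r * c_star D m kappa B d1 r"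
    by (auto elim: eventually_mono)
next
  fix a assume "ereal (mu_star D m kappa B d1) < a"
  then obtain \<mu> where "mu_star D m kappa B d1 < \<mu>" "ereal \<mu> < a"
    using ereal_dense2 by force
  with eventually_c_star_le[OF assms, of \<mu>]
  show "\<forall>\<^sub>F r in at_top. ereal r * c_star D m kappa B d1 r < a"
    by (auto elim: eventually_mono)
qed

text \<open>Only D, m, kappa > 0, d'(kappa) > 0 and b'(kappa) < 0 enter.\<close>

theorem lemma6p4:
  fixes D m kappa sM :: real and b d b' d' d'' :: "real \<Rightarrow> real"
  assumes m: "m > 1" and D: "D > 0"
    \<comment> \<open>d in C^2([0,+\<infinity>)) with derivatives d', d''\<close>
    and d_deriv: "\<And>s. s \<ge> 0 \<Longrightarrow> (d has_real_derivative d' s) (at s within {0..})"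
    and d'_deriv: "\<And>s. s \<ge> 0 \<Longrightarrow> (d' has_real_derivative d'' s) (at s within {0..})"
    and d''_cont: "continuous_on {0..} d''"
    and d0: "d 0 = 0"
    and d'_pos: "\<And>s. s > 0 \<Longrightarrow> d' s > 0"
    and d''_nonneg: "\<And>s. s > 0 \<Longrightarrow> d'' s \<ge> 0"
    \<comment> \<open>b in C^1([0,+\<infinity>);[0,+\<infinity>)) with derivative b'\<close>
    and b_deriv: "\<And>s. s \<ge> 0 \<Longrightarrow> (b has_real_derivative b' s) (at s within {0..})"
    and b'_cont: "continuous_on {0..} b'"
    and b_nonneg: "\<And>s. s \<ge> 0 \<Longrightarrow> b s \<ge> 0"
    \<comment> \<open>sM is the unique positive local extremum point, and the global maximum point\<close>
    and sM_pos: "sM > 0"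
    and sM_extr: "loc_extremum b sM"
    and sM_max: "\<And>s. s \<ge> 0 \<Longrightarrow> b s \<le> b sM"
    and sM_unique: "\<And>s. s > 0 \<Longrightarrow> loc_extremum b s \<Longrightarrow> s = sM"
    and b0: "b 0 = 0"
    and kappa: "kappa > 0"
    and b_kappa: "b kappa = d kappa"
    and b'0: "b' 0 > d' 0"
    and b'kappa: "b' kappa < d' kappa"
    and between: "\<And>s. 0 < s \<Longrightarrow> s < kappa \<Longrightarrow> d s < b s \<and> b s \<le> b' 0 * s"
    and sM_kappa: "sM < kappa"
    \<comment> \<open>hypothesis of the lemma\<close>
    and b'kappa_neg: "b' kappa < 0"
  shows "(\<forall>r>0. c_star D m kappa (b' kappa) (d' kappa) r \<ge> c_kappa D m kappa (b' kappa) (d' kappa) r)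
    \<and> (b' kappa \<ge> - d' kappa \<longrightarrow>
         (\<exists>R>0. \<forall>r\<ge>R. c_star D m kappa (b' kappa) (d' kappa) r = \<infinity>))
    \<and> (b' kappa < - d' kappa \<longrightarrow>
         ((\<lambda>r. ereal r * c_star D m kappa (b' kappa) (d' kappa) r)
            \<longlongrightarrow> ereal (mu_star D m kappa (b' kappa) (d' kappa))) at_top)"
proof -
  have A: "0 < D * m * kappa powr (m - 1)" using D m kappa by simp
  have d1: "0 < d' kappa" using d'_pos[OF kappa] .
  show ?thesis
    using c_kappa_le_c_star[OF _ A b'kappa_neg d1]
      c_star_eq_infinity[OF _ less_imp_le[OF A] b'kappa_neg]
      c_star_asymptotics[OF A d1]
    by (auto intro!: exI[of _ 1])
qed

end
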